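(* The law $\mathrm{y}\diamond(\mathrm{x}\diamond(\mathrm{y}\diamond(\mathrm{y}\diamond\mathrm{y})))\simeq\mathrm{x}$ does not imply the law $\mathrm{x}\simeq(\mathrm{x}\diamond\mathrm{x})\diamond(\mathrm{x}\diamond(\mathrm{x}\diamond\mathrm{x}))$.
   Context: A magma is a set with a binary operation $\diamond$; it satisfies a law if the identity holds for all assignments of variables. A law implies another if every magma satisfying the first satisfies the second. *)

theory Defs
  imports Main
begin

definition law_A :: "'a set \<Rightarrow> ('a \<Rightarrow> 'a \<Rightarrow> 'a) \<Rightarrow> bool" where
  "law_A M f \<longleftrightarrow> (\<forall>x\<in>M. \<forall>y\<in>M. f y (f x (f y (f y y))) = x)"

definition law_B :: "'a set \<Rightarrow> ('a \<Rightarrow> 'a \<Rightarrow> 'a) \<Rightarrow> bool" where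
  "law_B M f \<longleftrightarrow> (\<forall>x\<in>M. x = f (f x x) (f x (f x x)))"

definition magma_on :: "'a set \<Rightarrow> ('a \<Rightarrow> 'a \<Rightarrow> 'a) \<Rightarrow> bool" where
  "magma_on M f \<longleftrightarrow> M \<noteq> {} \<and> (\<forall>x\<in>M. \<forall>y\<in>M. f x y \<in> M)"

end

theory Submission
  imports Defs "HOL-Library.Countable"
begin

text \<open>
  Take the free magma on one generator (binary trees) and change it in a single place:
  \<open>y \<diamond> t\<close> reduces to \<open>x\<close> when \<open>t\<close> is the formal product \<open>x (y (y y))\<close>, and is the formal
  product \<open>y t\<close> otherwise. Since \<open>y y\<close>, \<open>y (y y)\<close> and \<open>x (y (y y))\<close> never have that shape,
  they stay formal, so \<open>y \<diamond> (x \<diamond> (y \<diamond> (y \<diamond> y)))\<close> collapses to \<open>x\<close>. Law B fails at a leaf,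
  whose right-hand side stays a formal product. Countability moves the model to \<open>nat\<close>.
\<close>

lemma countable_model_to_nat:
  fixes op :: "'a::countable \<Rightarrow> 'a \<Rightarrow> 'a"
  assumes "law_A UNIV op" and "\<not> law_B UNIV op"
  shows "\<exists>(M :: nat set) (f :: nat \<Rightarrow> nat \<Rightarrow> nat). magma_on M f \<and> law_A M f \<and> \<not> law_B M f"
proof (intro exI conjI)
  let ?f = "\<lambda>m n. to_nat (op (from_nat m) (from_nat n :: 'a))"
  show "magma_on (range (to_nat :: 'a \<Rightarrow> nat)) ?f"
    unfolding magma_on_def by auto
  show "law_A (range (to_nat :: 'a \<Rightarrow> nat)) ?f"
    using assms(1) unfolding law_A_def by auto
  show "\<not> law_B (range (to_nat :: 'a \<Rightarrow> nat)) ?f"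
    using assms(2) unfolding law_B_def by (metis from_nat_to_nat rangeI)
qed

datatype tree = Leaf | Node tree tree

instance tree :: countable by countable_datatype

definition tree_op :: "tree \<Rightarrow> tree \<Rightarrow> tree" where
  "tree_op y t =
     (case t of Node x (Node a (Node b c)) \<Rightarrow> if a = y \<and> b = y \<and> c = y then x else Node y t
      | _ \<Rightarrow> Node y t)"

lemma tree_op_cancel: "tree_op y (Node x (Node y (Node y y))) = x"
  by (simp add: tree_op_def)

lemma tree_op_formal:
  assumes "\<And>x. t \<noteq> Node x (Node y (Node y y))"
  shows "tree_op y t = Node y t"
  using assms by (auto simp: tree_op_def split: tree.split)

lemma tree_op_law_A: "law_A UNIV tree_op"
proof -
  have sq: "tree_op y y = Node y y" for y
    by (rule tree_op_formal) simp
  have cube: "tree_op y (Node y y) = Node y (Node y y)" for y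
    by (rule tree_op_formal) simp
  have "tree_op x (Node y (Node y y)) = Node x (Node y (Node y y))" for x y
    by (rule tree_op_formal) simp
  then show ?thesis
    unfolding law_A_def by (simp add: sq cube tree_op_cancel)
qed

lemma tree_op_not_law_B: "\<not> law_B UNIV tree_op"
proof -
  have "tree_op (tree_op Leaf Leaf) (tree_op Leaf (tree_op Leaf Leaf)) \<noteq> Leaf"
    by (simp add: tree_op_def)
  then show ?thesis
    unfolding law_B_def by (metis UNIV_I)
qed

theorem mainTheorem9:
  shows "\<exists>(M :: nat set) (f :: nat \<Rightarrow> nat \<Rightarrow> nat).
           magma_on M f \<and> law_A M f \<and> \<not> law_B M f"
  using countable_model_to_nat[OF tree_op_law_A tree_op_not_law_B] .

end
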